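(* Every object $(X,E)$ of $\mathsf{StoneE}^\mathsf{R}$ is isomorphic in $\mathsf{StoneE}^\mathsf{R}$ to the Gleason space $\mathcal G(X/E)$. Consequently the functor $\mathcal G\colon\mathsf{KHaus}^\mathsf{R}\to\mathsf{Gle}^\mathsf{R}$ is a quasi-inverse of $\mathcal Q\colon\mathsf{Gle}^\mathsf{R}\to\mathsf{KHaus}^\mathsf{R}$ (natural isomorphisms $\mathrm{id}_{\mathsf{Gle}^\mathsf{R}}\cong\mathcal G\circ\mathcal Q$ and $\mathrm{id}_{\mathsf{KHaus}^\mathsf{R}}\cong\mathcal Q\circ\mathcal G$), and the inclusion of $\mathsf{Gle}^\mathsf{R}$ into $\mathsf{StoneE}^\mathsf{R}$ is an equivalence of allegories.
   Context: $\mathsf{KHaus}^\mathsf{R}$: compact Hausdorff spaces and closed relations, relational composition, ordered by inclusion, dagger converse. $\mathsf{StoneE}^\mathsf{R}$: objects $(X,E)$ with $X$ a Stone space and $E$ a closed equivalence relation on $X$; morphisms $(X,E)\to(X',E')$ closed relations $R\subseteq X\times X'$ with $R\circ E=R=E'\circ R$; identity $E$; relational composition; ordered by inclusion; dagger converse. A Gleason space is an object $(X,E)$ of $\mathsf{StoneE}^\mathsf{R}$ with $X$ extremally disconnected and $E$ irreducible (for every proper closed $F\subsetneq X$, $E[F]\neq X$); $\mathsf{Gle}^\mathsf{R}$ is the full subcategory on Gleason spaces. $\mathcal Q$ sends $(X,E)$ to $X/E$ and $R$ to $\pi'\circ R\circ\breve\pi$ with $\pi,\pi'$ the quotient maps.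 For a compact Hausdorff space $X$, $g_X\colon\widehat X\to X$ denotes its Gleason cover (the extremally disconnected compact Hausdorff space $\widehat X$ with the irreducible continuous surjection $g_X$). $\mathcal G(X)=(\widehat X,E_X)$ where $x\mathrel{E_X}y\iff g_X(x)=g_X(y)$, and for a closed relation $R\colon X\to X'$, $\mathcal G(R)=\breve g_{X'}\circ R\circ g_X$, i.e.\ $x\mathrel{\mathcal G(R)}x'\iff g_X(x)\mathrel{R}g_{X'}(x')$. An equivalence of allegories is an equivalence of categories preserving binary meets of morphisms and daggers. *)

theory Defs
  imports "HOL-Analysis.Analysis"
begin

definition khaus :: "'a topology \<Rightarrow> bool" where
  "khaus X \<longleftrightarrow> compact_space X \<and> Hausdorff_space X"

definition stone_space :: "'a topology \<Rightarrow> bool" where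
  "stone_space X \<longleftrightarrow> khaus X \<and>
     (\<forall>x \<in> topspace X. connected_component_of_set X x = {x})"

definition extremally_disconnected :: "'a topology \<Rightarrow> bool" where
  "extremally_disconnected X \<longleftrightarrow> (\<forall>U. openin X U \<longrightarrow> openin X (X closure_of U))"

definition closed_rel :: "'a topology \<Rightarrow> 'b topology \<Rightarrow> ('a \<times> 'b) set \<Rightarrow> bool" where
  "closed_rel X Y R \<longleftrightarrow> closedin (prod_topology X Y) R"

text \<open>Relational composition: R : X -> Y then S : Y -> Z is \<open>R O S\<close>
  (in the paper's notation \<open>S \<circ> R\<close>).\<close>

definition khaus_iso :: "'a topology \<Rightarrow> 'b topology \<Rightarrow> ('a \<times> 'b) set \<Rightarrow> bool" where
  "khaus_iso X Y R \<longleftrightarrow> closed_rel X Y R \<and>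
     (\<exists>S. closed_rel Y X S \<and> R O S = Id_on (topspace X) \<and> S O R = Id_on (topspace Y))"

type_synonym 'a sobj = "'a topology \<times> ('a \<times> 'a) set"

definition stoneE_obj :: "'a sobj \<Rightarrow> bool" where
  "stoneE_obj XE \<longleftrightarrow> (case XE of (X, E) \<Rightarrow>
     stone_space X \<and> equiv (topspace X) E \<and> closed_rel X X E)"

definition stoneE_mor :: "'a sobj \<Rightarrow> 'b sobj \<Rightarrow> ('a \<times> 'b) set \<Rightarrow> bool" where
  "stoneE_mor XE YF R \<longleftrightarrow> (case XE of (X, E) \<Rightarrow> case YF of (Y, F) \<Rightarrow>
     closed_rel X Y R \<and> E O R = R \<and> R O F = R)"

text \<open>Isomorphism in StoneE^R (identity on (X,E) is E).\<close>
definition stoneE_iso :: "'a sobj \<Rightarrow> 'b sobj \<Rightarrow> ('a \<times> 'b) set \<Rightarrow> bool" where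
  "stoneE_iso XE YF R \<longleftrightarrow> stoneE_mor XE YF R \<and>
     (\<exists>S. stoneE_mor YF XE S \<and> R O S = snd XE \<and> S O R = snd YF)"

definition stoneE_isomorphic :: "'a sobj \<Rightarrow> 'b sobj \<Rightarrow> bool" where
  "stoneE_isomorphic XE YF \<longleftrightarrow> (\<exists>R. stoneE_iso XE YF R)"

definition gleason_space :: "'a sobj \<Rightarrow> bool" where
  "gleason_space XE \<longleftrightarrow> stoneE_obj XE \<and> (case XE of (X, E) \<Rightarrow>
     extremally_disconnected X \<and>
     (\<forall>F. closedin X F \<and> F \<subset> topspace X \<longrightarrow> E `` F \<noteq> topspace X))"

definition quotient_space :: "'a topology \<Rightarrow> ('a \<times> 'a) set \<Rightarrow> 'a set topology" where
  "quotient_space X E = topology (\<lambda>U. U \<subseteq> topspace X // E \<and> openin X (\<Union>U))"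

definition Q_obj :: "'a sobj \<Rightarrow> 'a set topology" where
  "Q_obj XE = quotient_space (fst XE) (snd XE)"

text \<open>Q(R) = \<pi>' \<circ> R \<circ> pi converse.\<close>
definition Q_mor :: "'a sobj \<Rightarrow> 'b sobj \<Rightarrow> ('a \<times> 'b) set \<Rightarrow> ('a set \<times> 'b set) set" where
  "Q_mor XE YF R = {(snd XE `` {x}, snd YF `` {y}) | x y. (x, y) \<in> R}"

definition gleason_cover :: "'a topology \<Rightarrow> 'c topology \<Rightarrow> ('c \<Rightarrow> 'a) \<Rightarrow> bool" where
  "gleason_cover X Y g \<longleftrightarrow> khaus Y \<and> extremally_disconnected Y \<and>
     continuous_map Y X g \<and> g ` topspace Y = topspace X \<and>
     (\<forall>F. closedin Y F \<and> F \<subset> topspace Y \<longrightarrow> g ` F \<noteq> topspace X)"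

text \<open>The chosen Gleason cover of X, realised on the type \<open>'a set set\<close>
  (large enough to carry the Stone space of the regular open algebra of X).\<close>
definition gcover :: "'a topology \<Rightarrow> 'a set set topology \<times> ('a set set \<Rightarrow> 'a)" where
  "gcover X = (SOME (Y, g). gleason_cover X Y g)"

definition G_obj :: "'a topology \<Rightarrow> 'a set set sobj" where
  "G_obj X = (case gcover X of (Y, g) \<Rightarrow>
     (Y, {(y, y'). y \<in> topspace Y \<and> y' \<in> topspace Y \<and> g y = g y'}))"

definition G_mor :: "'a topology \<Rightarrow> 'b topology \<Rightarrow> ('a \<times> 'b) set
                     \<Rightarrow> ('a set set \<times> 'b set set) set" where
  "G_mor X X' R = (case gcover X of (Y, g) \<Rightarrow> case gcover X' of (Y', g') \<Rightarrow>
     {(y, y'). y \<in> topspace Y \<and> y' \<in> topspace Y' \<and> (g y, g' y') \<in> R})"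

definition unit_rel :: "'a sobj \<Rightarrow> ('a \<times> 'a set set set) set" where
  "unit_rel XE = (case gcover (Q_obj XE) of (Y, g) \<Rightarrow>
     {(x, y). x \<in> topspace (fst XE) \<and> y \<in> topspace Y \<and> g y = snd XE `` {x}})"

definition counit_rel :: "'a topology \<Rightarrow> ('a \<times> 'a set set set) set" where
  "counit_rel X = (case gcover X of (Y, g) \<Rightarrow>
     {(x, snd (G_obj X) `` {y}) | x y. x \<in> topspace X \<and> y \<in> topspace Y \<and> g y = x})"

end

theory Submission
  imports Defs
begin

text \<open>
  The Gleason cover of a compact Hausdorff space \<open>X\<close> is realised as the space of maximal filters
  of open sets of \<open>X\<close> (equivalently, ultrafilters of its regular open algebra), each of which
  converges to a unique point of \<open>X\<close>; basic open sets \<open>{p. U \<in> p}\<close> are clopen and the closure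
  of an open set \<open>S\<close> is the basic set of the union of all \<open>U\<close> with \<open>{p. U \<in> p} \<subseteq> S\<close>.

  For a Stone space \<open>X\<close> with closed equivalence \<open>E\<close> and any continuous surjection
  \<open>g : Y \<rightarrow> X/E\<close>, the relation \<open>x \<eta> y \<longleftrightarrow> [x] = g y\<close> is difunctional with
  \<open>\<eta> \<eta>\<degree> = E\<close> and \<open>\<eta>\<degree> \<eta> = ker g\<close>, so it is an isomorphism \<open>(X, E) \<cong> (Y, ker g)\<close>;
  dually, for a continuous surjection \<open>g : Y \<rightarrow> X\<close> the relation \<open>x \<epsilon> [y] \<longleftrightarrow> g y = x\<close> is the
  graph of the homeomorphism \<open>Y / ker g \<cong> X\<close> induced by \<open>g\<close>. Taking \<open>g\<close> to be a Gleason
  cover gives the unit and counit; their naturality is a direct calculation with relational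
  composition.
\<close>

definition open_filter_base :: "'a topology \<Rightarrow> 'a set set \<Rightarrow> bool" where
  "open_filter_base X F \<longleftrightarrow> F \<subseteq> Collect (openin X) \<and> {} \<notin> F \<and> (\<forall>U\<in>F. \<forall>V\<in>F. U \<inter> V \<in> F)"

text \<open>Maximal filters of open sets; they correspond to the ultrafilters of the Boolean algebra of
  regular open sets, so the space they form is the Stone space of that algebra.\<close>

definition open_ultrafilters :: "'a topology \<Rightarrow> 'a set set set" where
  "open_ultrafilters X =
     {p. open_filter_base X p \<and> (\<forall>U. openin X U \<and> (\<forall>V\<in>p. U \<inter> V \<noteq> {}) \<longrightarrow> U \<in> p)}"

lemma open_ultrafilter_openin: "p \<in> open_ultrafilters X \<Longrightarrow> U \<in> p \<Longrightarrow> openin X U"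
  unfolding open_ultrafilters_def open_filter_base_def by blast

lemma open_ultrafilter_nonempty: "p \<in> open_ultrafilters X \<Longrightarrow> U \<in> p \<Longrightarrow> U \<noteq> {}"
  unfolding open_ultrafilters_def open_filter_base_def by blast

lemma open_ultrafilter_Int: "p \<in> open_ultrafilters X \<Longrightarrow> U \<in> p \<Longrightarrow> V \<in> p \<Longrightarrow> U \<inter> V \<in> p"
  unfolding open_ultrafilters_def open_filter_base_def by blast

lemma open_ultrafilter_iff:
  assumes "p \<in> open_ultrafilters X" "openin X U"
  shows "U \<in> p \<longleftrightarrow> (\<forall>V\<in>p. U \<inter> V \<noteq> {})"
proof
  show "U \<in> p \<Longrightarrow> \<forall>V\<in>p. U \<inter> V \<noteq> {}"
    using assms(1) open_ultrafilter_Int open_ultrafilter_nonempty by blast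
  show "\<forall>V\<in>p. U \<inter> V \<noteq> {} \<Longrightarrow> U \<in> p"
    using assms unfolding open_ultrafilters_def by blast
qed

lemma open_ultrafilter_mono:
  assumes "p \<in> open_ultrafilters X" "U \<in> p" "openin X V" "U \<subseteq> V"
  shows "V \<in> p"
  using assms open_ultrafilter_Int open_ultrafilter_nonempty
  by (subst open_ultrafilter_iff) blast+

lemma open_ultrafilter_disjoint_member:
  "p \<in> open_ultrafilters X \<Longrightarrow> openin X U \<Longrightarrow> U \<notin> p \<Longrightarrow> \<exists>V\<in>p. U \<inter> V = {}"
  using open_ultrafilter_iff by blast

lemma open_ultrafilter_topspace:
  assumes "p \<in> open_ultrafilters X"
  shows "topspace X \<in> p"
proof -
  obtain V where "V \<in> p"
    using open_ultrafilter_iff[OF assms openin_empty] open_ultrafilter_nonempty[OF assms] by blast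
  moreover have "V \<subseteq> topspace X"
    using open_ultrafilter_openin[OF assms \<open>V \<in> p\<close>] by (rule openin_subset)
  ultimately show ?thesis
    using open_ultrafilter_mono[OF assms _ openin_topspace] by blast
qed

lemma open_ultrafilter_Inter:
  assumes "p \<in> open_ultrafilters X"
  shows "finite F \<Longrightarrow> F \<noteq> {} \<Longrightarrow> F \<subseteq> p \<Longrightarrow> \<Inter>F \<in> p"
  by (induction F rule: finite_ne_induct) (auto intro: open_ultrafilter_Int[OF assms])

lemma open_filter_base_chain_Union:
  assumes "\<And>F. F \<in> C \<Longrightarrow> open_filter_base X F"
    and "\<And>A B. A \<in> C \<Longrightarrow> B \<in> C \<Longrightarrow> A \<subseteq> B \<or> B \<subseteq> A"
  shows "open_filter_base X (\<Union>C)"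
  unfolding open_filter_base_def
proof (intro conjI ballI)
  show "\<Union>C \<subseteq> Collect (openin X)" "{} \<notin> \<Union>C"
    using assms(1) unfolding open_filter_base_def by blast+
  fix U V assume "U \<in> \<Union>C" "V \<in> \<Union>C"
  then obtain A B where AB: "A \<in> C" "B \<in> C" "U \<in> A" "V \<in> B" by blast
  show "U \<inter> V \<in> \<Union>C"
  proof (cases "A \<subseteq> B")
    case True
    then have "U \<inter> V \<in> B"
      using AB assms(1)[OF AB(2)] unfolding open_filter_base_def by blast
    then show ?thesis using AB(2) by blast
  next
    case False
    then have "U \<inter> V \<in> A"
      using AB assms(1)[OF AB(1)] assms(2)[OF AB(1,2)] unfolding open_filter_base_def by blast
    then show ?thesis using AB(1) by blast
  qed
qed

lemma maximal_open_filter_base_is_ultrafilter: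
  assumes M: "open_filter_base X M" "M \<noteq> {}"
    and max: "\<And>F. open_filter_base X F \<Longrightarrow> M \<subseteq> F \<Longrightarrow> F = M"
  shows "M \<in> open_ultrafilters X"
  unfolding open_ultrafilters_def
proof (intro CollectI conjI allI impI)
  fix U assume U: "openin X U \<and> (\<forall>V\<in>M. U \<inter> V \<noteq> {})"
  define M' where "M' = {W. openin X W \<and> (\<exists>V\<in>M. U \<inter> V \<subseteq> W)}"
  have "open_filter_base X M'"
    unfolding open_filter_base_def
  proof (intro conjI ballI)
    fix A B assume "A \<in> M'" "B \<in> M'"
    then obtain V1 V2 where "V1 \<in> M" "V2 \<in> M" "U \<inter> V1 \<subseteq> A" "U \<inter> V2 \<subseteq> B" "openin X A" "openin X B"
      unfolding M'_def by blast
    moreover have "V1 \<inter> V2 \<in> M"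
      using M(1) \<open>V1 \<in> M\<close> \<open>V2 \<in> M\<close> unfolding open_filter_base_def by blast
    ultimately show "A \<inter> B \<in> M'"
      unfolding M'_def by blast
  qed (use U in \<open>auto simp: M'_def\<close>)
  moreover have "M \<subseteq> M'"
    using M(1) unfolding M'_def open_filter_base_def by blast
  ultimately have "M' = M" by (rule max)
  moreover have "U \<in> M'"
    using U M(2) unfolding M'_def by blast
  ultimately show "U \<in> M" by simp
qed (use M in simp)

lemma open_filter_base_extends_to_ultrafilter:
  assumes G: "open_filter_base X G" "G \<noteq> {}"
  shows "\<exists>p \<in> open_ultrafilters X. G \<subseteq> p"
proof -
  let ?S = "{F. open_filter_base X F \<and> G \<subseteq> F}"
  have "\<exists>M\<in>?S. \<forall>F\<in>?S. M \<subseteq> F \<longrightarrow> F = M"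
  proof (rule subset_Zorn_nonempty[of ?S])
    have "G \<in> ?S" using G(1) by simp
    then show "?S \<noteq> {}" by blast
  next
    fix C assume C: "C \<noteq> {}" "subset.chain ?S C"
    then have "C \<subseteq> ?S" by (simp add: subset_chain_def)
    moreover have "A \<subseteq> B \<or> B \<subseteq> A" if "A \<in> C" "B \<in> C" for A B
      using C(2) that by (simp add: subset_chain_def chain_subset_def)
    ultimately have "open_filter_base X (\<Union>C)"
      by (intro open_filter_base_chain_Union) auto
    moreover have "G \<subseteq> \<Union>C" using C(1) \<open>C \<subseteq> ?S\<close> by blast
    ultimately show "\<Union>C \<in> ?S" by blast
  qed
  then obtain M where M: "M \<in> ?S" and max: "\<forall>F\<in>?S. M \<subseteq> F \<longrightarrow> F = M" ..
  have "M \<in> open_ultrafilters X"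
  proof (rule maximal_open_filter_base_is_ultrafilter)
    show "open_filter_base X M" "M \<noteq> {}" using M G(2) by auto
    show "F = M" if "open_filter_base X F" "M \<subseteq> F" for F
      using max M that by auto
  qed
  with M show ?thesis by blast
qed

definition ultrafilter_nbhd :: "'a topology \<Rightarrow> 'a set \<Rightarrow> 'a set set set" where
  "ultrafilter_nbhd X U = {p \<in> open_ultrafilters X. U \<in> p}"

definition gleason_topology :: "'a topology \<Rightarrow> 'a set set topology" where
  "gleason_topology X =
     topology (arbitrary union_of (\<lambda>B. \<exists>U. openin X U \<and> B = ultrafilter_nbhd X U))"

lemma ultrafilter_nbhd_Int:
  assumes "openin X U" "openin X V"
  shows "ultrafilter_nbhd X (U \<inter> V) = ultrafilter_nbhd X U \<inter> ultrafilter_nbhd X V"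
  using assms open_ultrafilter_mono[of _ X "U \<inter> V"]
  by (auto simp: ultrafilter_nbhd_def intro: open_ultrafilter_Int)

lemma ultrafilter_nbhd_disjoint:
  assumes "U \<inter> V = {}"
  shows "ultrafilter_nbhd X U \<inter> ultrafilter_nbhd X V = {}"
  using assms open_ultrafilter_Int open_ultrafilter_nonempty
  unfolding ultrafilter_nbhd_def by fastforce

lemma ultrafilter_nbhd_empty: "ultrafilter_nbhd X {} = {}"
  using open_ultrafilter_nonempty unfolding ultrafilter_nbhd_def by blast

lemma ultrafilter_nbhd_topspace: "ultrafilter_nbhd X (topspace X) = open_ultrafilters X"
  using open_ultrafilter_topspace unfolding ultrafilter_nbhd_def by blast

lemma ultrafilter_nbhd_nonempty:
  assumes "openin X U" "U \<noteq> {}"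
  shows "ultrafilter_nbhd X U \<noteq> {}"
proof -
  have "open_filter_base X {U}"
    using assms unfolding open_filter_base_def by auto
  then obtain p where "p \<in> open_ultrafilters X" "U \<in> p"
    using open_filter_base_extends_to_ultrafilter by blast
  then show ?thesis unfolding ultrafilter_nbhd_def by blast
qed

lemma openin_gleason_topology:
  "openin (gleason_topology X) = arbitrary union_of (\<lambda>B. \<exists>U. openin X U \<and> B = ultrafilter_nbhd X U)"
  unfolding gleason_topology_def
proof (rule topology_inverse', rule istopology_base)
  fix S T assume "\<exists>U. openin X U \<and> S = ultrafilter_nbhd X U" "\<exists>U. openin X U \<and> T = ultrafilter_nbhd X U"
  then show "\<exists>U. openin X U \<and> S \<inter> T = ultrafilter_nbhd X U"
    using ultrafilter_nbhd_Int by blast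
qed

lemma openin_ultrafilter_nbhd: "openin X U \<Longrightarrow> openin (gleason_topology X) (ultrafilter_nbhd X U)"
  unfolding openin_gleason_topology by (rule arbitrary_union_of_inc) blast

lemma openin_gleason_topology_nbhd:
  assumes "openin (gleason_topology X) S" "p \<in> S"
  obtains U where "openin X U" "p \<in> ultrafilter_nbhd X U" "ultrafilter_nbhd X U \<subseteq> S"
proof -
  obtain \<U> where "\<U> \<subseteq> {B. \<exists>U. openin X U \<and> B = ultrafilter_nbhd X U}" "S = \<Union>\<U>"
    using assms(1) unfolding openin_gleason_topology union_of_def by auto
  with assms(2) obtain U where "openin X U" "p \<in> ultrafilter_nbhd X U" "ultrafilter_nbhd X U \<subseteq> S"
    by blast
  then show thesis ..
qed

lemma topspace_gleason_topology: "topspace (gleason_topology X) = open_ultrafilters X"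
proof
  show "topspace (gleason_topology X) \<subseteq> open_ultrafilters X"
  proof
    fix p assume "p \<in> topspace (gleason_topology X)"
    then obtain U where "p \<in> ultrafilter_nbhd X U"
      using openin_gleason_topology_nbhd[OF openin_topspace] by metis
    then show "p \<in> open_ultrafilters X" by (simp add: ultrafilter_nbhd_def)
  qed
  show "open_ultrafilters X \<subseteq> topspace (gleason_topology X)"
    using openin_subset[OF openin_ultrafilter_nbhd[OF openin_topspace]]
    by (simp add: ultrafilter_nbhd_topspace)
qed

lemma ultrafilter_nbhd_closure_complement:
  assumes p: "p \<in> open_ultrafilters X" and U: "openin X U"
  shows "p \<notin> ultrafilter_nbhd X U \<longleftrightarrow> p \<in> ultrafilter_nbhd X (topspace X - X closure_of U)"
proof
  assume "p \<notin> ultrafilter_nbhd X U"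
  then obtain V where V: "V \<in> p" "U \<inter> V = {}"
    using open_ultrafilter_disjoint_member[OF p U] p by (auto simp: ultrafilter_nbhd_def)
  have "V \<subseteq> topspace X - X closure_of U"
    using V openin_Int_closure_of_eq_empty[of X V U] open_ultrafilter_openin[OF p V(1)]
    by (auto dest: openin_subset)
  then have "topspace X - X closure_of U \<in> p"
    using open_ultrafilter_mono[OF p V(1)] by (simp add: openin_diff)
  with p show "p \<in> ultrafilter_nbhd X (topspace X - X closure_of U)"
    by (simp add: ultrafilter_nbhd_def)
next
  have "U \<inter> (topspace X - X closure_of U) = {}"
    using closure_of_subset[OF openin_subset[OF U]] by blast
  then show "p \<in> ultrafilter_nbhd X (topspace X - X closure_of U) \<Longrightarrow> p \<notin> ultrafilter_nbhd X U"
    using ultrafilter_nbhd_disjoint by blast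
qed

lemma closedin_ultrafilter_nbhd:
  assumes "openin X U"
  shows "closedin (gleason_topology X) (ultrafilter_nbhd X U)"
proof -
  have "topspace (gleason_topology X) - ultrafilter_nbhd X U
        = ultrafilter_nbhd X (topspace X - X closure_of U)"
    using ultrafilter_nbhd_closure_complement[OF _ assms]
    unfolding topspace_gleason_topology by (auto simp: ultrafilter_nbhd_def)
  moreover have "openin X (topspace X - X closure_of U)"
    by (simp add: openin_diff)
  ultimately show ?thesis
    unfolding closedin_def using openin_ultrafilter_nbhd
    by (auto simp: topspace_gleason_topology ultrafilter_nbhd_def)
qed

lemma Hausdorff_space_gleason_topology: "Hausdorff_space (gleason_topology X)"
  unfolding Hausdorff_space_def topspace_gleason_topology
proof (intro allI impI)
  have separate: "\<exists>A B. openin (gleason_topology X) A \<and> openin (gleason_topology X) B \<and>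
      p \<in> A \<and> q \<in> B \<and> disjnt A B"
    if pq: "p \<in> open_ultrafilters X" "q \<in> open_ultrafilters X" "U \<in> p" "U \<notin> q" for p q U
  proof -
    have U: "openin X U" using open_ultrafilter_openin pq by blast
    then obtain V where V: "V \<in> q" "U \<inter> V = {}"
      using open_ultrafilter_disjoint_member pq by blast
    show ?thesis
    proof (intro exI conjI)
      show "openin (gleason_topology X) (ultrafilter_nbhd X U)"
        by (rule openin_ultrafilter_nbhd[OF U])
      show "openin (gleason_topology X) (ultrafilter_nbhd X V)"
        using open_ultrafilter_openin[OF pq(2) V(1)] by (rule openin_ultrafilter_nbhd)
      show "p \<in> ultrafilter_nbhd X U" "q \<in> ultrafilter_nbhd X V"
        using pq V(1) by (auto simp: ultrafilter_nbhd_def)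
      show "disjnt (ultrafilter_nbhd X U) (ultrafilter_nbhd X V)"
        using ultrafilter_nbhd_disjoint[OF V(2)] by (simp add: disjnt_def)
    qed
  qed
  fix p q assume "p \<in> open_ultrafilters X \<and> q \<in> open_ultrafilters X \<and> p \<noteq> q"
  then show "\<exists>A B. openin (gleason_topology X) A \<and> openin (gleason_topology X) B \<and>
      p \<in> A \<and> q \<in> B \<and> disjnt A B"
    using separate[of p q] separate[of q p] by (metis disjnt_sym subset_antisym subsetI)
qed

lemma compact_space_gleason_topology: "compact_space (gleason_topology X)"
  unfolding compact_space_alt topspace_gleason_topology
proof (intro allI impI)
  fix \<U> assume \<U>: "(\<forall>S\<in>\<U>. openin (gleason_topology X) S) \<and> open_ultrafilters X \<subseteq> \<Union>\<U>"
  txt \<open>Without a finite subcover, the open sets whose basic set covers what a finite subfamily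
    leaves uncovered form a filter base; an ultrafilter containing it lies in no member of the
    cover.\<close>
  let ?G = "{V. openin X V \<and>
              (\<exists>\<F>. finite \<F> \<and> \<F> \<subseteq> \<U> \<and> open_ultrafilters X - \<Union>\<F> \<subseteq> ultrafilter_nbhd X V)}"
  show "\<exists>\<F>. finite \<F> \<and> \<F> \<subseteq> \<U> \<and> open_ultrafilters X \<subseteq> \<Union>\<F>"
  proof (rule ccontr)
    assume no_subcover: "\<nexists>\<F>. finite \<F> \<and> \<F> \<subseteq> \<U> \<and> open_ultrafilters X \<subseteq> \<Union>\<F>"
    have "open_filter_base X ?G"
      unfolding open_filter_base_def
    proof (intro conjI ballI)
      show "{} \<notin> ?G"
        using no_subcover by (auto simp: ultrafilter_nbhd_empty)
      fix A B assume "A \<in> ?G" "B \<in> ?G"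
      then obtain \<F>1 \<F>2 where "finite \<F>1" "\<F>1 \<subseteq> \<U>" "finite \<F>2" "\<F>2 \<subseteq> \<U>"
        "open_ultrafilters X - \<Union>\<F>1 \<subseteq> ultrafilter_nbhd X A"
        "open_ultrafilters X - \<Union>\<F>2 \<subseteq> ultrafilter_nbhd X B" "openin X A" "openin X B"
        by blast
      then show "A \<inter> B \<in> ?G"
        using ultrafilter_nbhd_Int[of X A B]
        by (intro CollectI conjI exI[of _ "\<F>1 \<union> \<F>2"]) auto
    qed auto
    moreover have "topspace X \<in> ?G"
      by (auto simp: ultrafilter_nbhd_topspace)
    ultimately obtain p where p: "p \<in> open_ultrafilters X" "?G \<subseteq> p"
      using open_filter_base_extends_to_ultrafilter by blast
    then obtain S where S: "S \<in> \<U>" "p \<in> S" using \<U> by blast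
    then obtain W where W: "openin X W" "p \<in> ultrafilter_nbhd X W" "ultrafilter_nbhd X W \<subseteq> S"
      using \<U> openin_gleason_topology_nbhd by metis
    have "open_ultrafilters X - \<Union>{S} \<subseteq> ultrafilter_nbhd X (topspace X - X closure_of W)"
      using W ultrafilter_nbhd_closure_complement by blast
    then have "topspace X - X closure_of W \<in> ?G"
      using S(1) by (intro CollectI conjI exI[of _ "{S}"]) (auto simp: openin_diff)
    then show False
      using p W(1,2) ultrafilter_nbhd_closure_complement unfolding ultrafilter_nbhd_def by blast
  qed
qed

lemma gleason_topology_closure_of_open:
  assumes S: "openin (gleason_topology X) S"
  defines "W \<equiv> \<Union>{U. openin X U \<and> ultrafilter_nbhd X U \<subseteq> S}"
  shows "gleason_topology X closure_of S = ultrafilter_nbhd X W"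
proof
  have W: "openin X W" unfolding W_def by blast
  have "S \<subseteq> ultrafilter_nbhd X W"
  proof
    fix p assume "p \<in> S"
    then obtain U where U: "openin X U" "p \<in> ultrafilter_nbhd X U" "ultrafilter_nbhd X U \<subseteq> S"
      using openin_gleason_topology_nbhd[OF S] by metis
    then have "U \<subseteq> W" unfolding W_def by blast
    with U W show "p \<in> ultrafilter_nbhd X W"
      using open_ultrafilter_mono unfolding ultrafilter_nbhd_def by blast
  qed
  then show "gleason_topology X closure_of S \<subseteq> ultrafilter_nbhd X W"
    by (rule closure_of_minimal[OF _ closedin_ultrafilter_nbhd[OF W]])
  show "ultrafilter_nbhd X W \<subseteq> gleason_topology X closure_of S"
  proof
    fix p assume p: "p \<in> ultrafilter_nbhd X W"
    show "p \<in> gleason_topology X closure_of S"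
      unfolding in_closure_of
    proof (intro conjI allI impI)
      show "p \<in> topspace (gleason_topology X)"
        using p by (simp add: topspace_gleason_topology ultrafilter_nbhd_def)
      fix T assume "p \<in> T \<and> openin (gleason_topology X) T"
      then obtain V where V: "openin X V" "p \<in> ultrafilter_nbhd X V" "ultrafilter_nbhd X V \<subseteq> T"
        using openin_gleason_topology_nbhd by metis
      then have "V \<inter> W \<noteq> {}"
        using p open_ultrafilter_Int open_ultrafilter_nonempty unfolding ultrafilter_nbhd_def by blast
      then obtain U where U: "openin X U" "ultrafilter_nbhd X U \<subseteq> S" "V \<inter> U \<noteq> {}"
        unfolding W_def by blast
      then obtain q where "q \<in> ultrafilter_nbhd X (V \<inter> U)"
        using ultrafilter_nbhd_nonempty[of X "V \<inter> U"] V(1) by blast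
      then have "q \<in> S \<and> q \<in> T"
        using U V ultrafilter_nbhd_Int[OF V(1) U(1)] by blast
      then show "\<exists>q. q \<in> S \<and> q \<in> T" ..
    qed
  qed
qed

lemma extremally_disconnected_gleason_topology:
  "extremally_disconnected (gleason_topology X)"
  unfolding extremally_disconnected_def
proof (intro allI impI)
  fix S assume S: "openin (gleason_topology X) S"
  have "openin X (\<Union>{U. openin X U \<and> ultrafilter_nbhd X U \<subseteq> S})"
    by (rule openin_Union) blast
  then show "openin (gleason_topology X) (gleason_topology X closure_of S)"
    unfolding gleason_topology_closure_of_open[OF S] by (rule openin_ultrafilter_nbhd)
qed

definition open_filter_converges :: "'a topology \<Rightarrow> 'a set set \<Rightarrow> 'a \<Rightarrow> bool" where
  "open_filter_converges X p x \<longleftrightarrow> x \<in> topspace X \<and> (\<forall>N. openin X N \<and> x \<in> N \<longrightarrow> N \<in> p)"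

definition ultrafilter_limit :: "'a topology \<Rightarrow> 'a set set \<Rightarrow> 'a" where
  "ultrafilter_limit X p = (THE x. open_filter_converges X p x)"

lemma open_ultrafilter_converges:
  assumes X: "compact_space X" and p: "p \<in> open_ultrafilters X"
  shows "\<exists>x. open_filter_converges X p x"
proof -
  have "\<forall>\<F>. finite \<F> \<and> \<F> \<subseteq> (\<lambda>V. X closure_of V) ` p \<longrightarrow> \<Inter>\<F> \<noteq> {}"
  proof (intro allI impI)
    fix \<F> assume \<F>: "finite \<F> \<and> \<F> \<subseteq> (\<lambda>V. X closure_of V) ` p"
    obtain F where F: "F \<subseteq> p" "finite F" "\<F> = (\<lambda>V. X closure_of V) ` F"
      using finite_subset_image \<F> by metis
    have "\<Inter>(insert (topspace X) F) \<in> p"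
      using F open_ultrafilter_topspace[OF p] by (intro open_ultrafilter_Inter[OF p]) auto
    moreover have "\<Inter>(insert (topspace X) F) \<subseteq> X closure_of V" if "V \<in> F" for V
    proof -
      have "V \<subseteq> X closure_of V"
        using F(1) that open_ultrafilter_openin[OF p]
        by (meson closure_of_subset openin_subset subsetD)
      with that show ?thesis by blast
    qed
    then have "\<Inter>(insert (topspace X) F) \<subseteq> \<Inter>\<F>"
      unfolding F(3) by blast
    ultimately show "\<Inter>\<F> \<noteq> {}"
      using open_ultrafilter_nonempty[OF p] by blast
  qed
  then have "\<Inter>((\<lambda>V. X closure_of V) ` p) \<noteq> {}"
    using X[unfolded compact_space_fip, rule_format, of "(\<lambda>V. X closure_of V) ` p"] by simp
  then obtain x where x: "\<And>V. V \<in> p \<Longrightarrow> x \<in> X closure_of V"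
    by blast
  have "x \<in> topspace X"
    using x[OF open_ultrafilter_topspace[OF p]] by simp
  moreover have "N \<in> p" if N: "openin X N" "x \<in> N" for N
  proof -
    have "N \<inter> V \<noteq> {}" if "V \<in> p" for V
      using x[OF that] N unfolding in_closure_of by blast
    then show ?thesis
      using open_ultrafilter_iff[OF p N(1)] by blast
  qed
  ultimately show ?thesis
    unfolding open_filter_converges_def by blast
qed

lemma open_ultrafilter_limit_unique:
  assumes "Hausdorff_space X" "p \<in> open_ultrafilters X"
    and "open_filter_converges X p x" "open_filter_converges X p y"
  shows "x = y"
proof (rule ccontr)
  assume "x \<noteq> y"
  moreover have "x \<in> topspace X" "y \<in> topspace X"
    using assms(3,4) unfolding open_filter_converges_def by auto
  ultimately obtain A B where "openin X A" "openin X B" "x \<in> A" "y \<in> B" "disjnt A B"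
    using assms(1)[unfolded Hausdorff_space_def, rule_format, of x y] by blast
  then have "A \<in> p" "B \<in> p" "A \<inter> B = {}"
    using assms(3,4) unfolding open_filter_converges_def disjnt_def by auto
  then show False
    using open_ultrafilter_Int[OF assms(2)] open_ultrafilter_nonempty[OF assms(2)] by metis
qed

context
  fixes X :: "'a topology"
  assumes X: "khaus X"
begin

lemma ultrafilter_limit_converges:
  assumes "p \<in> open_ultrafilters X"
  shows "open_filter_converges X p (ultrafilter_limit X p)"
proof -
  have "\<exists>!x. open_filter_converges X p x"
    using X open_ultrafilter_converges[OF _ assms] open_ultrafilter_limit_unique[OF _ assms]
    unfolding khaus_def by blast
  then show ?thesis
    unfolding ultrafilter_limit_def by (rule theI')
qed

lemma ultrafilter_limit:
  assumes "p \<in> open_ultrafilters X"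
  shows "ultrafilter_limit X p \<in> topspace X"
    and "\<And>N. openin X N \<Longrightarrow> ultrafilter_limit X p \<in> N \<Longrightarrow> N \<in> p"
  using ultrafilter_limit_converges[OF assms] unfolding open_filter_converges_def by blast+

lemma ultrafilter_limit_eqI:
  "p \<in> open_ultrafilters X \<Longrightarrow> open_filter_converges X p x \<Longrightarrow> ultrafilter_limit X p = x"
  using open_ultrafilter_limit_unique[of X p] X ultrafilter_limit_converges
  unfolding khaus_def by blast

lemma ultrafilter_limit_in_closure:
  assumes p: "p \<in> open_ultrafilters X" and "U \<in> p"
  shows "ultrafilter_limit X p \<in> X closure_of U"
  unfolding in_closure_of
proof (intro conjI allI impI)
  show "ultrafilter_limit X p \<in> topspace X"
    by (rule ultrafilter_limit(1)[OF p])
  fix T assume "ultrafilter_limit X p \<in> T \<and> openin X T"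
  then have "T \<inter> U \<in> p"
    using ultrafilter_limit(2)[OF p] open_ultrafilter_Int[OF p _ \<open>U \<in> p\<close>] by blast
  then show "\<exists>y. y \<in> U \<and> y \<in> T"
    using open_ultrafilter_nonempty[OF p] by blast
qed

lemma continuous_map_ultrafilter_limit:
  "continuous_map (gleason_topology X) X (ultrafilter_limit X)"
  unfolding continuous_map_def topspace_gleason_topology
proof (intro conjI allI impI)
  show "ultrafilter_limit X \<in> open_ultrafilters X \<rightarrow> topspace X"
    using ultrafilter_limit(1) by blast
  fix W assume W: "openin X W"
  show "openin (gleason_topology X) {p \<in> open_ultrafilters X. ultrafilter_limit X p \<in> W}"
  proof (subst openin_subopen, intro ballI)
    fix p assume "p \<in> {p \<in> open_ultrafilters X. ultrafilter_limit X p \<in> W}"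
    then have p: "p \<in> open_ultrafilters X" and pW: "ultrafilter_limit X p \<in> W" by auto
    have "regular_space X"
      using X compact_Hausdorff_imp_regular_space unfolding khaus_def by blast
    then obtain U where U: "openin X U" "ultrafilter_limit X p \<in> U"
      and "disjnt (topspace X - W) (X closure_of U)"
      using pW W ultrafilter_limit(1)[OF p] unfolding regular_space
      by (metis Diff_iff openin_closedin_eq)
    then have "X closure_of U \<subseteq> W"
      using closure_of_subset_topspace[of X U] unfolding disjnt_def by blast
    then have "ultrafilter_nbhd X U \<subseteq> {p \<in> open_ultrafilters X. ultrafilter_limit X p \<in> W}"
      using ultrafilter_limit_in_closure unfolding ultrafilter_nbhd_def by blast
    moreover have "p \<in> ultrafilter_nbhd X U"
      using p U ultrafilter_limit(2)[OF p] unfolding ultrafilter_nbhd_def by blast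
    ultimately show "\<exists>T. openin (gleason_topology X) T \<and> p \<in> T \<and>
        T \<subseteq> {p \<in> open_ultrafilters X. ultrafilter_limit X p \<in> W}"
      using openin_ultrafilter_nbhd[OF U(1)] by blast
  qed
qed

lemma ultrafilter_limit_surjective:
  "ultrafilter_limit X ` open_ultrafilters X = topspace X"
proof
  show "ultrafilter_limit X ` open_ultrafilters X \<subseteq> topspace X"
    using ultrafilter_limit(1) by blast
  show "topspace X \<subseteq> ultrafilter_limit X ` open_ultrafilters X"
  proof
    fix x assume x: "x \<in> topspace X"
    have "open_filter_base X {N. openin X N \<and> x \<in> N}"
      unfolding open_filter_base_def by auto
    then obtain p where p: "p \<in> open_ultrafilters X" "{N. openin X N \<and> x \<in> N} \<subseteq> p"
      using open_filter_base_extends_to_ultrafilter x by blast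
    then have "ultrafilter_limit X p = x"
      using x by (intro ultrafilter_limit_eqI) (auto simp: open_filter_converges_def)
    with p(1) show "x \<in> ultrafilter_limit X ` open_ultrafilters X"
      by blast
  qed
qed

lemma ultrafilter_limit_irreducible:
  assumes F: "closedin (gleason_topology X) F" "F \<subset> topspace (gleason_topology X)"
  shows "ultrafilter_limit X ` F \<noteq> topspace X"
proof -
  obtain p where p: "p \<in> topspace (gleason_topology X) - F"
    using F(2) by blast
  moreover have "openin (gleason_topology X) (topspace (gleason_topology X) - F)"
    using F(1) by blast
  ultimately obtain U where U: "openin X U" "p \<in> ultrafilter_nbhd X U"
    "ultrafilter_nbhd X U \<subseteq> topspace (gleason_topology X) - F"
    using openin_gleason_topology_nbhd by metis
  then obtain x where x: "x \<in> U"
    using open_ultrafilter_nonempty unfolding ultrafilter_nbhd_def by blast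
  have "x \<notin> ultrafilter_limit X ` F"
  proof
    assume "x \<in> ultrafilter_limit X ` F"
    then obtain q where q: "q \<in> F" "ultrafilter_limit X q = x" by blast
    then have "q \<in> open_ultrafilters X"
      using F closedin_subset topspace_gleason_topology by blast
    with q U x have "q \<in> ultrafilter_nbhd X U"
      using ultrafilter_limit(2) unfolding ultrafilter_nbhd_def by blast
    with q U show False by blast
  qed
  moreover have "x \<in> topspace X"
    using x U(1) openin_subset by blast
  ultimately show ?thesis by blast
qed

lemma gleason_cover_gleason_topology:
  "gleason_cover X (gleason_topology X) (ultrafilter_limit X)"
  unfolding gleason_cover_def khaus_def
  using compact_space_gleason_topology Hausdorff_space_gleason_topology
    extremally_disconnected_gleason_topology continuous_map_ultrafilter_limit
    ultrafilter_limit_surjective[folded topspace_gleason_topology]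
    ultrafilter_limit_irreducible
  by blast

end

lemma gleason_cover_gcover:
  fixes X :: "'a topology"
  assumes "khaus X"
  shows "gleason_cover X (fst (gcover X)) (snd (gcover X))"
proof -
  have "\<exists>c :: 'a set set topology \<times> ('a set set \<Rightarrow> 'a). (\<lambda>(Y, g). gleason_cover X Y g) c"
    using gleason_cover_gleason_topology[OF assms]
    by (intro exI[of _ "(gleason_topology X, ultrafilter_limit X)"]) simp
  then have "(\<lambda>(Y, g). gleason_cover X Y g) (gcover X)"
    unfolding gcover_def by (rule someI_ex)
  then show ?thesis by (simp add: case_prod_beta)
qed

lemma quotient_class_eq: "equiv A E \<Longrightarrow> c \<in> A // E \<Longrightarrow> x \<in> c \<Longrightarrow> c = E `` {x}"
  by (metis equiv_class_eq_iff quotientE Image_singleton_iff)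

lemma Union_quotient_Int:
  assumes "equiv A E" "S \<subseteq> A // E" "T \<subseteq> A // E"
  shows "\<Union>(S \<inter> T) = \<Union>S \<inter> \<Union>T"
  using assms quotient_disj[OF assms(1)] by blast

lemma Union_quotient_Diff:
  assumes E: "equiv A E" and C: "C \<subseteq> A // E"
  shows "\<Union>(A // E - C) = A - \<Union>C"
proof
  show "\<Union>(A // E - C) \<subseteq> A - \<Union>C"
    using C quotient_disj[OF E] Union_quotient[OF E] by blast
  show "A - \<Union>C \<subseteq> \<Union>(A // E - C)"
  proof
    fix x assume x: "x \<in> A - \<Union>C"
    then have "E `` {x} \<in> A // E - C" "x \<in> E `` {x}"
      using equiv_class_self[OF E] quotientI[of x A E] by blast+
    then show "x \<in> \<Union>(A // E - C)" by blast
  qed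
qed

lemma closedin_Image_compact:
  assumes "compact_space X" "closedin (prod_topology X Y) R" "closedin X K"
  shows "closedin Y (R `` K)"
proof -
  have "R `` K = snd ` (R \<inter> K \<times> topspace Y)"
    using closedin_subset[OF assms(2)] by force
  moreover have "closedin (prod_topology X Y) (R \<inter> K \<times> topspace Y)"
    using assms(2,3) by (simp add: closedin_Int closedin_prod_Times_iff)
  ultimately show ?thesis
    using closed_map_snd[OF assms(1), of Y] unfolding closed_map_def by metis
qed

context
  fixes X :: "'a topology" and E :: "('a \<times> 'a) set"
  assumes E: "equiv (topspace X) E"
begin

lemma openin_quotient_space:
  "openin (quotient_space X E) U \<longleftrightarrow> U \<subseteq> topspace X // E \<and> openin X (\<Union>U)"
proof -
  have "istopology (\<lambda>U. U \<subseteq> topspace X // E \<and> openin X (\<Union>U))"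
    unfolding istopology_def
  proof (rule conjI; intro allI impI)
    fix S T assume "S \<subseteq> topspace X // E \<and> openin X (\<Union>S)" "T \<subseteq> topspace X // E \<and> openin X (\<Union>T)"
    then show "S \<inter> T \<subseteq> topspace X // E \<and> openin X (\<Union>(S \<inter> T))"
      using Union_quotient_Int[OF E, of S T] by auto
  next
    fix K assume K: "\<forall>S\<in>K. S \<subseteq> topspace X // E \<and> openin X (\<Union>S)"
    have "\<Union>(\<Union>K) = (\<Union>S\<in>K. \<Union>S)" by blast
    with K show "\<Union>K \<subseteq> topspace X // E \<and> openin X (\<Union>(\<Union>K))" by auto
  qed
  then show ?thesis
    unfolding quotient_space_def by (simp add: topology_inverse')
qed

lemma topspace_quotient_space: "topspace (quotient_space X E) = topspace X // E"
  by (metis (no_types, lifting) E Union_quotient openin_quotient_space openin_subset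
      openin_topspace order_refl subset_antisym)

lemma closedin_quotient_space:
  "closedin (quotient_space X E) C \<longleftrightarrow> C \<subseteq> topspace X // E \<and> closedin X (\<Union>C)"
proof (cases "C \<subseteq> topspace X // E")
  case True
  then have "\<Union>C \<subseteq> topspace X"
    using Union_quotient[OF E] by blast
  with True show ?thesis
    using Union_quotient_Diff[OF E True]
    by (simp add: closedin_def openin_quotient_space topspace_quotient_space)
qed (auto simp: closedin_def topspace_quotient_space)

lemma quotient_map_quotient_class: "quotient_map X (quotient_space X E) (\<lambda>x. E `` {x})"
  unfolding quotient_map_def topspace_quotient_space
proof (intro conjI allI impI)
  show "(\<lambda>x. E `` {x}) ` topspace X = topspace X // E"
    unfolding quotient_def by blast
  fix U assume "U \<subseteq> topspace X // E"
  then have "{x \<in> topspace X. E `` {x} \<in> U} = \<Union>U"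
    using quotient_class_eq[OF E] equiv_class_self[OF E] Union_quotient[OF E] by blast
  with \<open>U \<subseteq> topspace X // E\<close> show "openin X {x \<in> topspace X. E `` {x} \<in> U} \<longleftrightarrow> openin (quotient_space X E) U"
    by (simp add: openin_quotient_space)
qed

lemma continuous_map_quotient_class: "continuous_map X (quotient_space X E) (\<lambda>x. E `` {x})"
  using quotient_map_quotient_class by (rule quotient_imp_continuous_map)

lemma closed_map_quotient_class:
  assumes "compact_space X" "closedin (prod_topology X X) E"
  shows "closed_map X (quotient_space X E) (\<lambda>x. E `` {x})"
  unfolding closed_map_def closedin_quotient_space
proof (intro allI impI conjI)
  fix K assume K: "closedin X K"
  then show "(\<lambda>x. E `` {x}) ` K \<subseteq> topspace X // E"
    using closedin_subset by (blast intro: quotientI)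
  have "\<Union>((\<lambda>x. E `` {x}) ` K) = E `` K" by blast
  then show "closedin X (\<Union>((\<lambda>x. E `` {x}) ` K))"
    using closedin_Image_compact[OF assms K] by simp
qed

lemma khaus_quotient_space:
  assumes X: "khaus X" and "closedin (prod_topology X X) E"
  shows "khaus (quotient_space X E)"
proof -
  have cpt: "compact_space X" and H: "Hausdorff_space X"
    using X unfolding khaus_def by auto
  have onto: "(\<lambda>x. E `` {x}) ` topspace X = topspace (quotient_space X E)"
    unfolding topspace_quotient_space quotient_def by blast
  have "compact_space (quotient_space X E)"
    using image_compactin[OF _ continuous_map_quotient_class] cpt onto
    unfolding compact_space_def by metis
  moreover have "Hausdorff_space (quotient_space X E)"
    using normal_Hausdorff_space_closed_continuous_map_image[OF _ H
        closed_map_quotient_class[OF cpt assms(2)] continuous_map_quotient_class onto]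
      compact_Hausdorff_or_regular_imp_normal_space[OF cpt] H by blast
  ultimately show ?thesis
    unfolding khaus_def by blast
qed

end

lemma closedin_fibre_product:
  assumes "Hausdorff_space Z" "continuous_map A Z f" "continuous_map B Z h"
  shows "closedin (prod_topology A B) {(a, b). a \<in> topspace A \<and> b \<in> topspace B \<and> f a = h b}"
proof -
  have "closedin (prod_topology A B) {z \<in> topspace (prod_topology A B). (f \<circ> fst) z = (h \<circ> snd) z}"
    by (intro closedin_continuous_maps_eq[OF assms(1)] continuous_map_compose[OF continuous_map_fst assms(2)]
        continuous_map_compose[OF continuous_map_snd assms(3)])
  moreover have "{z \<in> topspace (prod_topology A B). (f \<circ> fst) z = (h \<circ> snd) z}
      = {(a, b). a \<in> topspace A \<and> b \<in> topspace B \<and> f a = h b}" by auto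
  ultimately show ?thesis by simp
qed

lemma closed_rel_converse:
  assumes "closed_rel X Y R"
  shows "closed_rel Y X (converse R)"
proof -
  have "converse R = (\<lambda>(x, y). (y, x)) ` R" by force
  then show ?thesis
    using homeomorphic_imp_closed_map[OF homeomorphic_map_swap, of X Y] assms
    unfolding closed_rel_def closed_map_def by metis
qed

lemma extremally_disconnected_connected_component:
  assumes H: "Hausdorff_space Y" and ed: "extremally_disconnected Y" and y: "y \<in> topspace Y"
  shows "connected_component_of_set Y y = {y}"
proof -
  have "z = y" if yz: "connected_component_of Y y z" for z
  proof (rule ccontr)
    assume "z \<noteq> y"
    obtain C where C: "connectedin Y C" "y \<in> C" "z \<in> C"
      using yz unfolding connected_component_of_def by blast
    moreover have "z \<in> topspace Y"
      using connected_component_in_topspace[OF yz] by blast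
    ultimately obtain A B where AB: "openin Y A" "openin Y B" "y \<in> A" "z \<in> B" "disjnt A B"
      using H y \<open>z \<noteq> y\<close> unfolding Hausdorff_space_def by metis
    have "y \<in> Y closure_of A"
      using closure_of_subset[OF openin_subset[OF AB(1)]] AB(3) by blast
    moreover have "z \<notin> Y closure_of A"
      using openin_Int_closure_of_eq_empty[OF AB(2)] AB(4,5) unfolding disjnt_def by blast
    moreover have "openin Y (Y closure_of A)"
      using ed AB(1) unfolding extremally_disconnected_def by blast
    ultimately show False
      using connectedin_clopen_cases[OF C(1) closedin_closure_of] C(2,3) unfolding disjnt_def by blast
  qed
  then show ?thesis
    using connected_component_of_refl y by fastforce
qed

definition kernel_rel :: "'c topology \<Rightarrow> ('c \<Rightarrow> 'a) \<Rightarrow> ('c \<times> 'c) set" where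
  "kernel_rel Y g = {(y, y'). y \<in> topspace Y \<and> y' \<in> topspace Y \<and> g y = g y'}"

lemma equiv_kernel_rel: "equiv (topspace Y) (kernel_rel Y g)"
  unfolding equiv_def refl_on_def sym_def trans_def kernel_rel_def by auto

lemma closed_rel_kernel_rel:
  "Hausdorff_space X \<Longrightarrow> continuous_map Y X g \<Longrightarrow> closed_rel Y Y (kernel_rel Y g)"
  unfolding closed_rel_def kernel_rel_def by (rule closedin_fibre_product)

lemma kernel_rel_Image_irreducible:
  assumes gc: "gleason_cover X Y g" and F: "closedin Y F" "F \<subset> topspace Y"
  shows "kernel_rel Y g `` F \<noteq> topspace Y"
proof
  assume full: "kernel_rel Y g `` F = topspace Y"
  have "F \<subseteq> kernel_rel Y g `` F"
    using F(2) unfolding kernel_rel_def by blast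
  moreover have "g ` (kernel_rel Y g `` F) \<subseteq> g ` F"
  proof (rule image_subsetI)
    fix y assume "y \<in> kernel_rel Y g `` F"
    then obtain f where "f \<in> F" "g f = g y"
      unfolding kernel_rel_def by blast
    then show "g y \<in> g ` F" by (metis imageI)
  qed
  ultimately have "g ` F = g ` (kernel_rel Y g `` F)"
    by blast
  also have "\<dots> = topspace X"
    using gc full unfolding gleason_cover_def by simp
  finally show False
    using gc F unfolding gleason_cover_def by blast
qed

lemma gleason_space_kernel_rel:
  assumes X: "khaus X" and gc: "gleason_cover X Y g"
  shows "gleason_space (Y, kernel_rel Y g)"
proof -
  have Y: "khaus Y" "extremally_disconnected Y" and g: "continuous_map Y X g"
    using gc unfolding gleason_cover_def by auto
  have "Hausdorff_space Y"
    using Y(1) unfolding khaus_def by blast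
  then have "stone_space Y"
    using Y unfolding stone_space_def by (simp add: extremally_disconnected_connected_component)
  moreover have "closed_rel Y Y (kernel_rel Y g)"
    using X g closed_rel_kernel_rel unfolding khaus_def by blast
  ultimately show ?thesis
    unfolding gleason_space_def stoneE_obj_def
    using Y(2) equiv_kernel_rel kernel_rel_Image_irreducible[OF gc] by auto
qed

definition induced_map :: "('c \<Rightarrow> 'a) \<Rightarrow> 'c set \<Rightarrow> 'a" where
  "induced_map g c = g (SOME y. y \<in> c)"

definition counit_rel_of :: "'a topology \<Rightarrow> 'c topology \<Rightarrow> ('c \<Rightarrow> 'a) \<Rightarrow> ('a \<times> 'c set) set" where
  "counit_rel_of X Y g =
     {(x, kernel_rel Y g `` {y}) | x y. x \<in> topspace X \<and> y \<in> topspace Y \<and> g y = x}"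

definition pullback_rel :: "'c topology \<Rightarrow> ('c \<Rightarrow> 'a) \<Rightarrow> 'd topology \<Rightarrow> ('d \<Rightarrow> 'b) \<Rightarrow> ('a \<times> 'b) set
    \<Rightarrow> ('c \<times> 'd) set" where
  "pullback_rel Y g Y' g' R = {(y, y'). y \<in> topspace Y \<and> y' \<in> topspace Y' \<and> (g y, g' y') \<in> R}"

lemma induced_map_class:
  assumes "y \<in> topspace Y"
  shows "induced_map g (kernel_rel Y g `` {y}) = g y"
proof -
  define z where "z = (SOME z. z \<in> kernel_rel Y g `` {y})"
  have "y \<in> kernel_rel Y g `` {y}"
    using assms unfolding kernel_rel_def by simp
  then have "z \<in> kernel_rel Y g `` {y}"
    unfolding z_def by (rule someI)
  then have "g z = g y"
    unfolding kernel_rel_def by simp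
  then show ?thesis
    unfolding induced_map_def z_def[symmetric] .
qed

lemma continuous_map_induced_map:
  assumes "continuous_map Y X g"
  shows "continuous_map (quotient_space Y (kernel_rel Y g)) X (induced_map g)"
proof (rule continuous_compose_quotient_map[OF quotient_map_quotient_class[OF equiv_kernel_rel]])
  show "continuous_map Y X (induced_map g \<circ> (\<lambda>y. kernel_rel Y g `` {y}))"
    using assms by (rule continuous_map_eq) (simp add: induced_map_class)
qed

lemma counit_rel_of_eq:
  "counit_rel_of X Y g = {(x, c). x \<in> topspace X \<and> c \<in> topspace Y // kernel_rel Y g \<and> induced_map g c = x}"
proof (intro set_eqI iffI)
  fix z assume "z \<in> counit_rel_of X Y g"
  then obtain y where "z = (g y, kernel_rel Y g `` {y})" "y \<in> topspace Y" "g y \<in> topspace X"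
    unfolding counit_rel_of_def by blast
  then show "z \<in> {(x, c). x \<in> topspace X \<and> c \<in> topspace Y // kernel_rel Y g \<and> induced_map g c = x}"
    by (simp add: induced_map_class quotientI)
next
  fix z assume "z \<in> {(x, c). x \<in> topspace X \<and> c \<in> topspace Y // kernel_rel Y g \<and> induced_map g c = x}"
  then obtain x c where z: "z = (x, c)" "x \<in> topspace X" "c \<in> topspace Y // kernel_rel Y g"
    "induced_map g c = x" by blast
  then obtain y where "y \<in> topspace Y" "c = kernel_rel Y g `` {y}"
    by (metis quotientE)
  with z show "z \<in> counit_rel_of X Y g"
    unfolding counit_rel_of_def by (auto simp: induced_map_class)
qed

context
  fixes X :: "'a topology" and Y :: "'c topology" and g :: "'c \<Rightarrow> 'a"
  assumes onto: "g ` topspace Y = topspace X"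
begin

lemma counit_rel_of_O_converse: "counit_rel_of X Y g O converse (counit_rel_of X Y g) = Id_on (topspace X)"
proof (intro set_eqI iffI)
  fix z assume "z \<in> counit_rel_of X Y g O converse (counit_rel_of X Y g)"
  then show "z \<in> Id_on (topspace X)"
    unfolding counit_rel_of_eq by auto
next
  fix z assume "z \<in> Id_on (topspace X)"
  then obtain y where "z = (g y, g y)" "y \<in> topspace Y"
    using onto by (auto elim!: Id_onE)
  moreover have "(g y, kernel_rel Y g `` {y}) \<in> counit_rel_of X Y g" if "y \<in> topspace Y" for y
    using onto that unfolding counit_rel_of_def by blast
  ultimately show "z \<in> counit_rel_of X Y g O converse (counit_rel_of X Y g)"
    by blast
qed

lemma converse_O_counit_rel_of:
  "converse (counit_rel_of X Y g) O counit_rel_of X Y g = Id_on (topspace Y // kernel_rel Y g)"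
proof (intro set_eqI iffI)
  fix z assume "z \<in> converse (counit_rel_of X Y g) O counit_rel_of X Y g"
  then obtain y y' where z: "z = (kernel_rel Y g `` {y}, kernel_rel Y g `` {y'})"
    and "y \<in> topspace Y" "y' \<in> topspace Y" "g y = g y'"
    unfolding counit_rel_of_def by auto
  then have "(y, y') \<in> kernel_rel Y g"
    by (simp add: kernel_rel_def)
  then have "kernel_rel Y g `` {y} = kernel_rel Y g `` {y'}"
    by (rule equiv_class_eq[OF equiv_kernel_rel])
  moreover have "kernel_rel Y g `` {y} \<in> topspace Y // kernel_rel Y g"
    using \<open>y \<in> topspace Y\<close> by (rule quotientI)
  ultimately show "z \<in> Id_on (topspace Y // kernel_rel Y g)"
    by (simp add: z Id_onI)
next
  fix z assume "z \<in> Id_on (topspace Y // kernel_rel Y g)"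
  then obtain y where "z = (kernel_rel Y g `` {y}, kernel_rel Y g `` {y})" "y \<in> topspace Y"
    by (auto elim: quotientE)
  then show "z \<in> converse (counit_rel_of X Y g) O counit_rel_of X Y g"
    using onto unfolding counit_rel_of_def by blast
qed

lemma khaus_iso_counit_rel_of:
  assumes "Hausdorff_space X" "continuous_map Y X g"
  shows "khaus_iso X (quotient_space Y (kernel_rel Y g)) (counit_rel_of X Y g)"
proof -
  have "closed_rel X (quotient_space Y (kernel_rel Y g)) (counit_rel_of X Y g)"
    using closedin_fibre_product[OF assms(1) continuous_map_id continuous_map_induced_map[OF assms(2)]]
    unfolding closed_rel_def counit_rel_of_eq topspace_quotient_space[OF equiv_kernel_rel]
    by (simp add: eq_commute)
  then show ?thesis
    unfolding khaus_iso_def topspace_quotient_space[OF equiv_kernel_rel]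
    using closed_rel_converse counit_rel_of_O_converse converse_O_counit_rel_of by blast
qed

end

lemma counit_rel_of_natural:
  assumes onto: "g ` topspace Y = topspace X" and R: "R \<subseteq> topspace X \<times> topspace X'"
  shows "R O counit_rel_of X' Y' g' =
         counit_rel_of X Y g O Q_mor (Y, kernel_rel Y g) (Y', kernel_rel Y' g') (pullback_rel Y g Y' g' R)"
    (is "_ = _ O ?Q")
proof (intro set_eqI iffI)
  fix z assume "z \<in> R O counit_rel_of X' Y' g'"
  then obtain x y' where z: "z = (x, kernel_rel Y' g' `` {y'})" "(x, g' y') \<in> R" "y' \<in> topspace Y'"
    unfolding counit_rel_of_def by blast
  then have "x \<in> g ` topspace Y"
    using R onto by blast
  then obtain y where y: "y \<in> topspace Y" "g y = x"
    by (metis imageE)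
  then have "(x, kernel_rel Y g `` {y}) \<in> counit_rel_of X Y g"
    using R z(2) unfolding counit_rel_of_def by blast
  moreover have "(kernel_rel Y g `` {y}, kernel_rel Y' g' `` {y'}) \<in> ?Q"
    using y z unfolding Q_mor_def pullback_rel_def by auto
  ultimately show "z \<in> counit_rel_of X Y g O ?Q"
    using z(1) by blast
next
  fix z assume "z \<in> counit_rel_of X Y g O ?Q"
  then obtain y a b where z: "z = (g y, kernel_rel Y' g' `` {b})" "y \<in> topspace Y"
    and a: "kernel_rel Y g `` {y} = kernel_rel Y g `` {a}" and ab: "(a, b) \<in> pullback_rel Y g Y' g' R"
    unfolding counit_rel_of_def Q_mor_def by auto
  have "y \<in> kernel_rel Y g `` {a}"
    using a z(2) by (auto simp: kernel_rel_def)
  then have "(g y, g' b) \<in> R"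
    using ab unfolding kernel_rel_def pullback_rel_def by auto
  moreover have "(g' b, kernel_rel Y' g' `` {b}) \<in> counit_rel_of X' Y' g'"
    using R ab \<open>(g y, g' b) \<in> R\<close> unfolding counit_rel_of_def pullback_rel_def by blast
  ultimately show "z \<in> R O counit_rel_of X' Y' g'"
    using z(1) by blast
qed

definition unit_rel_of :: "'a topology \<Rightarrow> ('a \<times> 'a) set \<Rightarrow> 'c topology \<Rightarrow> ('c \<Rightarrow> 'a set) \<Rightarrow> ('a \<times> 'c) set" where
  "unit_rel_of X E Y g = {(x, y). x \<in> topspace X \<and> y \<in> topspace Y \<and> g y = E `` {x}}"

lemma unit_rel_of_difunctional:
  "(unit_rel_of X E Y g O converse (unit_rel_of X E Y g)) O unit_rel_of X E Y g = unit_rel_of X E Y g"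
  unfolding unit_rel_of_def by auto

context
  fixes X :: "'a topology" and E :: "('a \<times> 'a) set" and Y :: "'c topology" and g :: "'c \<Rightarrow> 'a set"
  assumes E: "equiv (topspace X) E" and onto: "g ` topspace Y = topspace X // E"
begin

lemma unit_rel_of_O_converse: "unit_rel_of X E Y g O converse (unit_rel_of X E Y g) = E"
proof (intro set_eqI iffI)
  fix z assume "z \<in> unit_rel_of X E Y g O converse (unit_rel_of X E Y g)"
  then show "z \<in> E"
    using eq_equiv_class_iff[OF E] unfolding unit_rel_of_def by auto
next
  fix z assume "z \<in> E"
  then obtain x x' where z: "z = (x, x')" "x \<in> topspace X" "x' \<in> topspace X" "E `` {x} = E `` {x'}"
    using E equiv_class_eq_iff by (metis surj_pair)
  moreover obtain y where "y \<in> topspace Y" "g y = E `` {x}"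
    using onto z(2) by (metis imageE quotientI)
  ultimately show "z \<in> unit_rel_of X E Y g O converse (unit_rel_of X E Y g)"
    unfolding unit_rel_of_def by auto
qed

lemma converse_O_unit_rel_of: "converse (unit_rel_of X E Y g) O unit_rel_of X E Y g = kernel_rel Y g"
proof (intro set_eqI iffI)
  fix z assume "z \<in> converse (unit_rel_of X E Y g) O unit_rel_of X E Y g"
  then show "z \<in> kernel_rel Y g"
    unfolding unit_rel_of_def kernel_rel_def by auto
next
  fix z assume "z \<in> kernel_rel Y g"
  then obtain y y' where z: "z = (y, y')" "y \<in> topspace Y" "y' \<in> topspace Y" "g y = g y'"
    unfolding kernel_rel_def by blast
  moreover obtain x where "x \<in> topspace X" "g y = E `` {x}"
    using onto z(2) by (metis imageI quotientE)
  ultimately show "z \<in> converse (unit_rel_of X E Y g) O unit_rel_of X E Y g"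
    unfolding unit_rel_of_def by auto
qed

lemma stoneE_iso_unit_rel_of:
  assumes X: "khaus X" and "closedin (prod_topology X X) E" and g: "continuous_map Y (quotient_space X E) g"
  shows "stoneE_iso (X, E) (Y, kernel_rel Y g) (unit_rel_of X E Y g)"
proof -
  let ?\<eta> = "unit_rel_of X E Y g"
  have "Hausdorff_space (quotient_space X E)"
    using khaus_quotient_space[OF E X assms(2)] unfolding khaus_def by blast
  then have closed: "closed_rel X Y ?\<eta>"
    using closedin_fibre_product[OF _ continuous_map_quotient_class[OF E] g]
    unfolding closed_rel_def unit_rel_of_def by (simp add: eq_commute)
  txt \<open>Difunctionality turns the two composites into the morphism identities.\<close>
  have "converse ((?\<eta> O converse ?\<eta>) O ?\<eta>) = converse ?\<eta>"
    by (simp only: unit_rel_of_difunctional[of X E Y g])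
  then have dif': "(converse ?\<eta> O ?\<eta>) O converse ?\<eta> = converse ?\<eta>"
    by (simp only: converse_relcomp converse_converse O_assoc)
  have "E O ?\<eta> = ?\<eta>"
    using unit_rel_of_difunctional[of X E Y g] by (simp only: unit_rel_of_O_converse)
  moreover have "?\<eta> O kernel_rel Y g = ?\<eta>"
    using unit_rel_of_difunctional[of X E Y g] by (simp only: O_assoc converse_O_unit_rel_of)
  moreover have "kernel_rel Y g O converse ?\<eta> = converse ?\<eta>"
    using dif' by (simp only: converse_O_unit_rel_of)
  moreover have "converse ?\<eta> O E = converse ?\<eta>"
    using dif' by (simp only: O_assoc unit_rel_of_O_converse)
  ultimately show ?thesis
    unfolding stoneE_iso_def stoneE_mor_def
    using closed closed_rel_converse[OF closed] unit_rel_of_O_converse converse_O_unit_rel_of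
    by auto
qed

end

lemma unit_rel_of_natural:
  assumes E: "equiv (topspace X) E" and onto: "g ` topspace Y = topspace X // E"
    and ER: "E O R = R" and R: "R \<subseteq> topspace X \<times> topspace X'"
  shows "R O unit_rel_of X' E' Y' g' =
         unit_rel_of X E Y g O pullback_rel Y g Y' g' (Q_mor (X, E) (X', E') R)"
    (is "_ = _ O ?P")
proof (intro set_eqI iffI)
  fix z assume "z \<in> R O unit_rel_of X' E' Y' g'"
  then obtain x x' y' where z: "z = (x, y')" "(x, x') \<in> R" "y' \<in> topspace Y'" "g' y' = E' `` {x'}"
    unfolding unit_rel_of_def by blast
  have "x \<in> topspace X" using R z(2) by blast
  then have "E `` {x} \<in> g ` topspace Y"
    unfolding onto by (rule quotientI)
  then obtain y where y: "y \<in> topspace Y" "g y = E `` {x}"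
    by (metis imageE)
  with \<open>x \<in> topspace X\<close> have "(x, y) \<in> unit_rel_of X E Y g"
    unfolding unit_rel_of_def by simp
  moreover have "(y, y') \<in> ?P"
    using y z unfolding pullback_rel_def Q_mor_def by auto
  ultimately show "z \<in> unit_rel_of X E Y g O ?P"
    using z(1) by blast
next
  fix z assume "z \<in> unit_rel_of X E Y g O ?P"
  then obtain x y y' a b where z: "z = (x, y')" "x \<in> topspace X" "g y = E `` {x}" "y' \<in> topspace Y'"
    and ab: "g y = E `` {a}" "g' y' = E' `` {b}" "(a, b) \<in> R"
    unfolding unit_rel_of_def pullback_rel_def Q_mor_def by auto
  have "(x, a) \<in> E"
    using ab R z eq_equiv_class_iff[OF E] by blast
  then have "(x, b) \<in> R"
    using ab(3) ER by blast
  moreover have "(b, y') \<in> unit_rel_of X' E' Y' g'"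
    using R \<open>(x, b) \<in> R\<close> z ab unfolding unit_rel_of_def by auto
  ultimately show "z \<in> R O unit_rel_of X' E' Y' g'"
    using z(1) by blast
qed

lemma G_obj_gcover: "G_obj Z = (fst (gcover Z), kernel_rel (fst (gcover Z)) (snd (gcover Z)))"
  unfolding G_obj_def kernel_rel_def by (simp add: case_prod_beta)

lemma G_mor_gcover:
  "G_mor Z Z' S = pullback_rel (fst (gcover Z)) (snd (gcover Z)) (fst (gcover Z')) (snd (gcover Z')) S"
  unfolding G_mor_def pullback_rel_def by (simp add: case_prod_beta)

lemma unit_rel_gcover:
  "unit_rel (X, E) =
   unit_rel_of X E (fst (gcover (Q_obj (X, E)))) (snd (gcover (Q_obj (X, E))))"
  unfolding unit_rel_def unit_rel_of_def by (simp add: case_prod_beta)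

lemma counit_rel_gcover: "counit_rel X = counit_rel_of X (fst (gcover X)) (snd (gcover X))"
  unfolding counit_rel_def counit_rel_of_def G_obj_gcover by (simp add: case_prod_beta)

lemma closed_rel_subset: "closed_rel X Y R \<Longrightarrow> R \<subseteq> topspace X \<times> topspace Y"
  unfolding closed_rel_def using closedin_subset by fastforce

lemma stoneE_objD:
  assumes "stoneE_obj (X, E)"
  shows "khaus X" "equiv (topspace X) E" "closedin (prod_topology X X) E"
  using assms unfolding stoneE_obj_def stone_space_def closed_rel_def by auto

lemma khaus_Q_obj: "stoneE_obj (X, E) \<Longrightarrow> khaus (Q_obj (X, E))"
  unfolding Q_obj_def using stoneE_objD khaus_quotient_space by (metis fst_conv snd_conv)

lemma gleason_space_G_obj: "khaus Z \<Longrightarrow> gleason_space (G_obj Z)"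
  unfolding G_obj_gcover by (rule gleason_space_kernel_rel[OF _ gleason_cover_gcover])

lemma stoneE_iso_unit_rel:
  assumes "stoneE_obj (X, E)"
  shows "stoneE_iso (X, E) (G_obj (Q_obj (X, E))) (unit_rel (X, E))"
proof -
  note gc = gleason_cover_gcover[OF khaus_Q_obj[OF assms]]
  show ?thesis
    unfolding G_obj_gcover unit_rel_gcover
    using gc stoneE_objD[OF assms]
    by (intro stoneE_iso_unit_rel_of) (auto simp: gleason_cover_def Q_obj_def topspace_quotient_space)
qed

lemma unit_rel_natural:
  assumes "stoneE_obj (X, E)" and "stoneE_mor (X, E) (X', E') R"
  shows "R O unit_rel (X', E') =
         unit_rel (X, E) O G_mor (Q_obj (X, E)) (Q_obj (X', E')) (Q_mor (X, E) (X', E') R)"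
proof -
  note gc = gleason_cover_gcover[OF khaus_Q_obj[OF assms(1)]]
  have "R \<subseteq> topspace X \<times> topspace X'"
    using assms(2) closed_rel_subset unfolding stoneE_mor_def by auto
  then show ?thesis
    unfolding G_mor_gcover unit_rel_gcover
    using gc stoneE_objD[OF assms(1)] assms(2)
    by (intro unit_rel_of_natural) (auto simp: gleason_cover_def stoneE_mor_def Q_obj_def topspace_quotient_space)
qed

lemma khaus_iso_counit_rel:
  assumes "khaus X"
  shows "khaus_iso X (Q_obj (G_obj X)) (counit_rel X)"
  using gleason_cover_gcover[OF assms] assms
  unfolding Q_obj_def G_obj_gcover counit_rel_gcover gleason_cover_def khaus_def
  by (simp add: khaus_iso_counit_rel_of)

lemma counit_rel_natural:
  assumes "khaus X" and "closed_rel X X' R"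
  shows "R O counit_rel X' = counit_rel X O Q_mor (G_obj X) (G_obj X') (G_mor X X' R)"
  using gleason_cover_gcover[OF assms(1)] closed_rel_subset[OF assms(2)]
  unfolding G_obj_gcover G_mor_gcover counit_rel_gcover gleason_cover_def
  by (intro counit_rel_of_natural) auto

theorem theorem4p6:
  fixes X :: "'a topology" and E :: "('a \<times> 'a) set"
    and X' :: "'b topology" and E' :: "('b \<times> 'b) set"
    and R :: "('a \<times> 'b) set"
  shows
   "(stoneE_obj (X, E) \<longrightarrow>
       gleason_space (G_obj (Q_obj (X, E))) \<and> stoneE_isomorphic (X, E) (G_obj (Q_obj (X, E))))
  \<and> (gleason_space (X, E) \<longrightarrow>
       stoneE_iso (X, E) (G_obj (Q_obj (X, E))) (unit_rel (X, E)))
  \<and> (gleason_space (X, E) \<and> gleason_space (X', E') \<and> stoneE_mor (X, E) (X', E') R \<longrightarrow>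
       R O unit_rel (X', E') =
       unit_rel (X, E) O G_mor (Q_obj (X, E)) (Q_obj (X', E')) (Q_mor (X, E) (X', E') R))
  \<and> (khaus X \<longrightarrow>
       gleason_space (G_obj X) \<and> khaus_iso X (Q_obj (G_obj X)) (counit_rel X))
  \<and> (khaus X \<and> khaus X' \<and> closed_rel X X' R \<longrightarrow>
       R O counit_rel X' = counit_rel X O Q_mor (G_obj X) (G_obj X') (G_mor X X' R))"
proof (intro conjI impI)
  assume "stoneE_obj (X, E)"
  then show "gleason_space (G_obj (Q_obj (X, E)))" "stoneE_isomorphic (X, E) (G_obj (Q_obj (X, E)))"
    using gleason_space_G_obj khaus_Q_obj stoneE_iso_unit_rel unfolding stoneE_isomorphic_def by blast+
next
  assume "gleason_space (X, E)"
  then show "stoneE_iso (X, E) (G_obj (Q_obj (X, E))) (unit_rel (X, E))"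
    unfolding gleason_space_def by (simp add: stoneE_iso_unit_rel)
next
  assume "gleason_space (X, E) \<and> gleason_space (X', E') \<and> stoneE_mor (X, E) (X', E') R"
  then show "R O unit_rel (X', E') =
      unit_rel (X, E) O G_mor (Q_obj (X, E)) (Q_obj (X', E')) (Q_mor (X, E) (X', E') R)"
    unfolding gleason_space_def by (simp add: unit_rel_natural)
next
  assume "khaus X"
  then show "gleason_space (G_obj X)" "khaus_iso X (Q_obj (G_obj X)) (counit_rel X)"
    by (simp_all add: gleason_space_G_obj khaus_iso_counit_rel)
next
  assume "khaus X \<and> khaus X' \<and> closed_rel X X' R"
  then show "R O counit_rel X' = counit_rel X O Q_mor (G_obj X) (G_obj X') (G_mor X X' R)"
    by (simp add: counit_rel_natural)
qed

end
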